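(* Assume $0<A,B\le 1$ and $B\ge B_0(A)$. Let $U$ satisfy $G_{A,B}(U)=0$ and $L(A,B)\le U\le R(A,B)$. Then \[ \frac1\pi G'_{A,B}(U)\ge\sqrt{2(1+AB)}, \] equivalently \[ (A+B)\sin(\pi U)+B\kappa\sin(\pi M(U))+A\varepsilon\sin(\pi N(U))\ge\sqrt{2(1+AB)}. \]
   Context: For $0<A,B\le1$ put $\kappa=\sqrt{1-A^2}$, $\varepsilon=\sqrt{1-B^2}$, $P=P(A,B)=\frac{1+AB}{B(A+B)}$, $M(U)=\kappa(P-U)$, $N(U)=\varepsilon\left(U+\frac{\kappa^2}{A(A+B)}\right)$, and $G_{A,B}(U)=B\cos(\pi M(U))-A\cos(\pi N(U))-(A+B)\cos(\pi U)$. Further $L(A,B)=\frac{\kappa}{1+\kappa}\frac{1+AB}{B(A+B)}$, $R(A,B)=\frac{1-\varepsilon\kappa^2/[A(A+B)]}{1+\varepsilon}$, and $B_0(A)=\frac{-A(1-\kappa)+\sqrt{A^2(1-\kappa)^2+8\kappa(1+\kappa)}}{2(1+\kappa)}$. *)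

theory Defs
  imports "HOL-Analysis.Analysis"
begin

definition kap :: "real \<Rightarrow> real" where "kap A = sqrt (1 - A^2)"
definition eps :: "real \<Rightarrow> real" where "eps B = sqrt (1 - B^2)"
definition PP :: "real \<Rightarrow> real \<Rightarrow> real" where "PP A B = (1 + A*B) / (B*(A+B))"
definition MM :: "real \<Rightarrow> real \<Rightarrow> real \<Rightarrow> real" where "MM A B U = kap A * (PP A B - U)"
definition NN :: "real \<Rightarrow> real \<Rightarrow> real \<Rightarrow> real" where
  "NN A B U = eps B * (U + (kap A)^2 / (A*(A+B)))"
definition GG :: "real \<Rightarrow> real \<Rightarrow> real \<Rightarrow> real" where
  "GG A B U = B * cos (pi * MM A B U) - A * cos (pi * NN A B U) - (A+B) * cos (pi * U)"
definition LL :: "real \<Rightarrow> real \<Rightarrow> real" where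
  "LL A B = kap A / (1 + kap A) * ((1 + A*B) / (B*(A+B)))"
definition RR :: "real \<Rightarrow> real \<Rightarrow> real" where
  "RR A B = (1 - eps B * (kap A)^2 / (A*(A+B))) / (1 + eps B)"
definition B0 :: "real \<Rightarrow> real" where
  "B0 A = (- A * (1 - kap A) + sqrt (A^2 * (1 - kap A)^2 + 8 * kap A * (1 + kap A))) / (2 * (1 + kap A))"

end

theory Submission
  imports Defs
begin

(* Write F = G'/pi, so that F(U) is the quantity to be bounded, and H(t) = A cos(pi M(t)) - B cos(pi N(t)).
   Using kappa^2 = 1 - A^2 and epsilon^2 = 1 - B^2 one finds F' = pi (A B H - G), hence the Lyapunov
   function Phi = F^2 + G^2 - 2 A B H(1/2) G has derivative 2 pi A B F (H - H(1/2)).  On [L, R] the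
   numbers t, M(t), N(t) all lie in [0, 1], so F >= 0 there and H is increasing; thus Phi attains its
   minimum over [L, R] at the anchor point 1/2.  At a zero U of G we get F(U)^2 = Phi(U) >= Phi(1/2).
   The hypothesis B >= B0(A) is equivalent to kappa + epsilon + kappa epsilon <= 1 + A B, which is
   symmetric in A and B and says exactly that u = M(1/2) and w = N(1/2) are at most 1/2.  Then Jordan's
   inequality sin(pi u) >= 2u and the bound cos(pi u) >= 1 - (pi^2/2) u^2 reduce Phi(1/2) >= 2 (1 + A B)
   to a polynomial inequality, which is checked on ten cells of the parameter range. *)

section \<open>Elementary trigonometric bounds\<close>

lemma sin_pi_mult_ge_twice:
  fixes u :: real
  assumes "0 \<le> u" "u \<le> 1/2"
  shows "2*u \<le> sin (pi*u)"
proof -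
  have "concave_on {0..pi/2} sin"
    by (rule f''_le0_imp_concave[where f' = cos and f'' = "\<lambda>x. - sin x"])
       (auto intro!: derivative_eq_intros sin_ge_zero)
  then have "(1 - 2*u) * sin 0 + (2*u) * sin (pi/2) \<le> sin ((1 - 2*u) *\<^sub>R 0 + (2*u) *\<^sub>R (pi/2))"
    by (rule concave_onD) (use assms in auto)
  then show ?thesis by (simp add: mult.commute)
qed

lemma cos_ge_one_minus_half_sq: "1 - t^2/2 \<le> cos (t::real)"
proof -
  have "(sin (t/2))^2 \<le> (t/2)^2"
    using abs_sin_x_le_abs_x[of "t/2"] abs_le_square_iff by blast
  then show ?thesis using cos_double_sin[of "t/2"] by (simp add: power_divide)
qed

text \<open>The constant 4.935 is a rational upper bound for \<open>pi\<^sup>2/2 = 4.9348...\<close>.\<close>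

lemma cos_pi_mult_ge: "1 - 4.935*u^2 \<le> cos (pi*u)"
proof -
  have "pi * pi \<le> 3.1416 * 3.1416"
    using pi_approx pi_gt_zero by (intro mult_mono) auto
  then have "pi^2/2 \<le> 4.935" by (simp add: power2_eq_square)
  then have "(pi*u)^2/2 \<le> 4.935*u^2"
    using mult_right_mono[of "pi^2/2" "4.935" "u^2"] by (simp add: power_mult_distrib)
  then show ?thesis using cos_ge_one_minus_half_sq[of "pi*u"] by linarith
qed

lemma anchor_trig_bounds:
  fixes a k u :: real
  assumes "0 \<le> a" "0 \<le> k" "k^2 = 1 - a^2" "k \<le> 2*u" "u \<le> 1/2"
  shows "2*u \<le> sin (pi*u)" and "0 \<le> cos (pi*u)" and "cos (pi*u) \<le> a"
proof -
  have u0: "0 \<le> u" using assms by linarith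
  show sin_ge: "2*u \<le> sin (pi*u)" by (rule sin_pi_mult_ge_twice[OF u0 assms(5)])
  have "pi*u \<le> pi/2" using assms(5) by simp
  moreover have "0 \<le> pi*u" using u0 by simp
  ultimately show "0 \<le> cos (pi*u)" using pi_gt_zero by (intro cos_ge_zero) linarith+
  have "k^2 \<le> (sin (pi*u))^2" using assms(2,4) sin_ge by (intro power_mono) auto
  then have "(cos (pi*u))^2 \<le> a^2" using assms(3) sin_cos_squared_add[of "pi*u"] by linarith
  then show "cos (pi*u) \<le> a" using assms(1) by (rule power2_le_imp_le)
qed

section \<open>The polynomial inequality at the anchor point\<close>

lemma lower_bound_b_on_cell:
  fixes a b \<beta> aH :: real
  assumes "0 \<le> a" "a \<le> aH" "0 < b" "2 - a^2 \<le> b^2*(1+a^2)" "\<beta>^2*(1+aH^2) \<le> 2 - aH^2"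
  shows "\<beta> \<le> b"
proof (rule ccontr)
  assume "\<not> \<beta> \<le> b"
  then have "b^2 < \<beta>^2" using assms(3) by (intro power_strict_mono) auto
  then have "b^2*(1+a^2) < \<beta>^2*(1+a^2)" by (intro mult_strict_right_mono) (auto simp: add_pos_nonneg)
  moreover have "a^2 \<le> aH^2" using assms(1,2) by (intro power_mono) auto
  then have "\<beta>^2*(1+a^2) \<le> \<beta>^2*(1+aH^2)" by (intro mult_left_mono) auto
  ultimately show False using assms(4,5) \<open>a^2 \<le> aH^2\<close> by linarith
qed

text \<open>On a cell \<open>aL \<le> a \<le> aH\<close> the constraint forces \<open>b \<ge> \<beta>\<close>, and every factor of the
  left-hand side is monotone there, so it is dominated by the corner value in the last hypothesis.\<close>

lemma quadratic_bound_on_cell: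
  fixes a b k aL aH K \<beta> :: real
  assumes a: "aL \<le> a" "a \<le> aH" and b: "0 < b" "b \<le> 1" and k: "0 \<le> k" "k^2 = 1 - a^2"
    and ab: "2 \<le> a^2*b^2 + a^2 + b^2"
    and aL: "0 \<le> aL" and \<beta>: "0 < \<beta>" "aH \<le> 2*\<beta>" "\<beta>^2*(1+aH^2) \<le> 2 - aH^2"
    and K: "0 \<le> K" "1 - aL^2 \<le> K^2"
    and cell: "K * (4.935*(2 + aH*\<beta> - \<beta>^2)^2/(4*\<beta>*(aL+\<beta>)^2) - \<beta>/(1+aH)) \<le> 1"
  shows "k * (4.935*(2+a*b-b^2)^2/(4*b*(a+b)^2) - b/(1+a)) \<le> 1"
proof -
  define Q where "Q = 4.935*(2 + aH*\<beta> - \<beta>^2)^2/(4*\<beta>*(aL+\<beta>)^2) - \<beta>/(1+aH)"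
  have a0: "0 \<le> a" using a(1) aL by linarith
  have "2 - a^2 \<le> b^2*(1+a^2)" using ab by (simp add: algebra_simps)
  then have \<beta>b: "\<beta> \<le> b" by (rule lower_bound_b_on_cell[OF a0 a(2) b(1) _ \<beta>(3)])
  have "aL^2 \<le> a^2" using a(1) aL by (intro power_mono)
  then have "k^2 \<le> K^2" using k(2) K(2) by linarith
  then have "k \<le> K" using K(1) by (rule power2_le_imp_le)
  have "b^2 \<le> 1" using b by (intro power_le_one) auto
  moreover have "0 \<le> a*b" using a0 b(1) by simp
  ultimately have T0: "0 \<le> 2+a*b-b^2" by linarith
  have "a*b \<le> aH*b" using a(2) b(1) by (intro mult_right_mono) auto
  moreover have "(aH*b - b^2) - (aH*\<beta> - \<beta>^2) = (b - \<beta>)*(aH - b - \<beta>)"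
    by (simp add: algebra_simps power2_eq_square)
  moreover have "(b - \<beta>)*(aH - b - \<beta>) \<le> 0" using \<beta>b \<beta>(2) by (intro mult_nonneg_nonpos) auto
  ultimately have "2+a*b-b^2 \<le> 2 + aH*\<beta> - \<beta>^2" by linarith
  then have "(2+a*b-b^2)^2 \<le> (2 + aH*\<beta> - \<beta>^2)^2" using T0 by (rule power_mono)
  moreover have "(aL+\<beta>)^2 \<le> (a+b)^2" using a(1) \<beta>b aL \<beta>(1) by (intro power_mono) auto
  then have "4*\<beta>*(aL+\<beta>)^2 \<le> 4*b*(a+b)^2" using \<beta>b \<beta>(1) by (intro mult_mono) auto
  ultimately have "4.935*(2+a*b-b^2)^2/(4*b*(a+b)^2) \<le> 4.935*(2 + aH*\<beta> - \<beta>^2)^2/(4*\<beta>*(aL+\<beta>)^2)"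
    using aL \<beta>(1) by (intro frac_le) auto
  moreover have "\<beta>/(1+aH) \<le> b/(1+a)" using a(2) \<beta>b a0 \<beta>(1) by (intro frac_le) auto
  ultimately have "k * (4.935*(2+a*b-b^2)^2/(4*b*(a+b)^2) - b/(1+a)) \<le> k * Q"
    unfolding Q_def using k(1) by (intro mult_left_mono) auto
  also have "\<dots> \<le> 1"
  proof (cases "0 \<le> Q")
    case True
    then have "k * Q \<le> K * Q" using \<open>k \<le> K\<close> by (intro mult_right_mono)
    then show ?thesis using cell unfolding Q_def by linarith
  next
    case False
    then show ?thesis using k(1) mult_nonneg_nonpos[of k Q] by linarith
  qed
  finally show ?thesis .
qed

text \<open>The constraint forces \<open>a > 0.7\<close>; the constants of the ten cells were found numerically.\<close>

lemma quadratic_bound: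
  fixes a b k :: real
  assumes a: "0 < a" "a \<le> 1" and b: "0 < b" "b \<le> 1" and k: "0 \<le> k" "k^2 = 1 - a^2"
    and ab: "2 \<le> a^2*b^2 + a^2 + b^2"
  shows "k * (4.935*(2+a*b-b^2)^2/(4*b*(a+b)^2) - b/(1+a)) \<le> 1"
proof -
  have "b^2 \<le> 1" using b by (intro power_le_one) auto
  then have "a^2*b^2 \<le> a^2" by (simp add: mult_left_le)
  then have "0.7^2 < a^2" using ab \<open>b^2 \<le> 1\<close> by (simp add: power2_eq_square)
  then have "0.7 < a" by (rule power2_less_imp_less) (use a(1) in simp)
  note cell = quadratic_bound_on_cell[OF _ _ b k ab]
  have "0.7 \<le> a \<Longrightarrow> a \<le> 0.73 \<Longrightarrow> ?thesis"
    by (rule cell[where aL="0.7" and aH="0.73" and \<beta>="0.978" and K="0.715"]) (simp_all add: power2_eq_square)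
  moreover have "0.73 \<le> a \<Longrightarrow> a \<le> 0.76 \<Longrightarrow> ?thesis"
    by (rule cell[where aL="0.73" and aH="0.76" and \<beta>="0.949" and K="0.684"]) (simp_all add: power2_eq_square)
  moreover have "0.76 \<le> a \<Longrightarrow> a \<le> 0.79 \<Longrightarrow> ?thesis"
    by (rule cell[where aL="0.76" and aH="0.79" and \<beta>="0.92" and K="0.65"]) (simp_all add: power2_eq_square)
  moreover have "0.79 \<le> a \<Longrightarrow> a \<le> 0.82 \<Longrightarrow> ?thesis"
    by (rule cell[where aL="0.79" and aH="0.82" and \<beta>="0.89" and K="0.614"]) (simp_all add: power2_eq_square)
  moreover have "0.82 \<le> a \<Longrightarrow> a \<le> 0.85 \<Longrightarrow> ?thesis"
    by (rule cell[where aL="0.82" and aH="0.85" and \<beta>="0.861" and K="0.573"]) (simp_all add: power2_eq_square)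
  moreover have "0.85 \<le> a \<Longrightarrow> a \<le> 0.88 \<Longrightarrow> ?thesis"
    by (rule cell[where aL="0.85" and aH="0.88" and \<beta>="0.831" and K="0.527"]) (simp_all add: power2_eq_square)
  moreover have "0.88 \<le> a \<Longrightarrow> a \<le> 0.91 \<Longrightarrow> ?thesis"
    by (rule cell[where aL="0.88" and aH="0.91" and \<beta>="0.8" and K="0.475"]) (simp_all add: power2_eq_square)
  moreover have "0.91 \<le> a \<Longrightarrow> a \<le> 0.94 \<Longrightarrow> ?thesis"
    by (rule cell[where aL="0.91" and aH="0.94" and \<beta>="0.769" and K="0.415"]) (simp_all add: power2_eq_square)
  moreover have "0.94 \<le> a \<Longrightarrow> a \<le> 0.97 \<Longrightarrow> ?thesis"
    by (rule cell[where aL="0.94" and aH="0.97" and \<beta>="0.738" and K="0.342"]) (simp_all add: power2_eq_square)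
  moreover have "0.97 \<le> a \<Longrightarrow> a \<le> 1 \<Longrightarrow> ?thesis"
    by (rule cell[where aL="0.97" and aH="1" and \<beta>="0.707" and K="0.244"]) (simp_all add: power2_eq_square)
  ultimately show ?thesis using \<open>0.7 < a\<close> a(2) by linarith
qed

lemma anchor_margin:
  fixes a b k u :: real
  assumes a: "0 < a" "a \<le> 1" and b: "0 < b" "b \<le> 1" and k: "0 \<le> k" "k^2 = 1 - a^2"
    and ab: "2 \<le> a^2*b^2 + a^2 + b^2"
    and u: "2*u*b*(a+b) = k*(2+a*b-b^2)"
  shows "b*(a - 1 + 4.935*u^2) \<le> k"
proof -
  define T where "T = 2+a*b-b^2"
  define Z where "Z = a+b"
  have "b \<noteq> 0" "Z \<noteq> 0" "1 + a \<noteq> 0" using a b by (auto simp: Z_def)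
  moreover have "u*(2*b*Z) = k*T" using u unfolding T_def Z_def by (simp add: algebra_simps)
  ultimately have u_eq: "u = k*T/(2*b*Z)" by (simp add: eq_divide_eq)
  have a_eq: "a - 1 = -(k^2/(1+a))" using k(2) \<open>1 + a \<noteq> 0\<close> by (simp add: field_simps power2_eq_square)
  have "b*(a - 1) = k*(k*(- b/(1+a)))"
    unfolding a_eq using \<open>1 + a \<noteq> 0\<close> by (simp add: field_simps power2_eq_square)
  moreover have "4.935*b*u^2 = k*(k*(4.935*T^2/(4*b*Z^2)))"
    unfolding u_eq using \<open>b \<noteq> 0\<close> \<open>Z \<noteq> 0\<close>
    by (simp add: power_divide power_mult_distrib field_simps power2_eq_square)
  ultimately have "b*(a - 1 + 4.935*u^2) = k*(k*(4.935*T^2/(4*b*Z^2) - b/(1+a)))"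
    by (simp add: algebra_simps)
  also have "\<dots> \<le> k * 1"
    using quadratic_bound[OF a b k ab, folded T_def Z_def] k(1) by (rule mult_left_mono)
  finally show ?thesis by simp
qed

lemma cos_diff_sq_le:
  fixes a b k e u w x y :: real
  assumes a: "0 < a" "a \<le> 1" and b: "0 < b" "b \<le> 1"
    and k: "0 \<le> k" "k^2 = 1 - a^2" and e: "0 \<le> e" "e^2 = 1 - b^2"
    and u: "2*u*b*(a+b) = k*(2+a*b-b^2)" and w: "2*w*a*(a+b) = e*(2+a*b-a^2)"
    and x: "0 \<le> x" "x \<le> a" "1 - 4.935*u^2 \<le> x"
    and y: "0 \<le> y" "y \<le> b" "1 - 4.935*w^2 \<le> y"
  shows "(b*x - a*y)^2 \<le> k^2 + e^2"
proof -
  have bx: "0 \<le> b*x" "b*x \<le> a*b" using b(1) x(1,2) by (auto simp: mult.commute mult_left_mono)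
  have ay: "0 \<le> a*y" "a*y \<le> a*b" using a(1) y(1,2) by (auto simp: mult_left_mono)
  show ?thesis
  proof (cases "a^2*b^2 \<le> k^2 + e^2")
    case True
    have "\<bar>b*x - a*y\<bar> \<le> a*b" using bx ay by linarith
    then have "(b*x - a*y)^2 \<le> (a*b)^2" using a(1) b(1) by (simp add: power2_le_iff_abs_le)
    then show ?thesis using True by (simp add: power_mult_distrib)
  next
    case False
    then have ab: "2 \<le> a^2*b^2 + a^2 + b^2" using k(2) e(2) by simp
    have "b*(a - 1 + 4.935*u^2) \<le> k" by (rule anchor_margin[OF a b k ab u])
    moreover have "b*(1 - 4.935*u^2) \<le> b*x" using b(1) x(3) by (intro mult_left_mono) auto
    ultimately have lo: "-k \<le> b*x - a*y" using ay by (simp add: algebra_simps)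
    have "a*(b - 1 + 4.935*w^2) \<le> e"
      by (rule anchor_margin[OF b a e]) (use ab w in \<open>simp_all add: algebra_simps\<close>)
    moreover have "a*(1 - 4.935*w^2) \<le> a*y" using a(1) y(3) by (intro mult_left_mono) auto
    ultimately have hi: "b*x - a*y \<le> e" using bx by (simp add: algebra_simps)
    show ?thesis
    proof (cases "0 \<le> b*x - a*y")
      case True
      then have "(b*x - a*y)^2 \<le> e^2" using hi by (intro power_mono)
      then show ?thesis by (simp add: add_increasing)
    next
      case False
      then have "\<bar>b*x - a*y\<bar> \<le> k" using lo by linarith
      then have "(b*x - a*y)^2 \<le> k^2" using k(1) by (simp add: power2_le_iff_abs_le)
      then show ?thesis by (simp add: add_increasing2)
    qed
  qed
qed

lemma abs_scaled_diff_le: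
  fixes c d x y a b :: real
  assumes "0 \<le> c" "0 \<le> d" "0 \<le> x" "x \<le> a" "0 \<le> y" "y \<le> b"
  shows "\<bar>c*x - d*y\<bar> \<le> max (c*a) (d*b)"
proof -
  have "0 \<le> c*x" "c*x \<le> c*a" "0 \<le> d*y" "d*y \<le> d*b"
    using assms by (auto intro: mult_left_mono)
  then show ?thesis by linarith
qed

lemma anchor_sine_term_ge:
  fixes a b k u m :: real
  assumes "0 \<le> a + b" "0 \<le> b" "0 \<le> k" "2*u \<le> m" "2*u*b*(a+b) = k*(2+a*b-b^2)"
  shows "k^2*(2+a*b-b^2) \<le> (a+b)*(b*k*m)"
proof -
  have "k^2*(2+a*b-b^2) = k*(k*(2+a*b-b^2))" by (simp add: power2_eq_square)
  also have "\<dots> = (a+b)*(b*k*(2*u))" unfolding assms(5)[symmetric] by (simp add: algebra_simps)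
  also have "\<dots> \<le> (a+b)*(b*k*m)" using assms(1-4) by (intro mult_left_mono) auto
  finally show ?thesis .
qed

text \<open>With \<open>m1, m2, x, y\<close> standing for \<open>sin (pi u), sin (pi w), cos (pi u), cos (pi w)\<close>, the
  right-hand side is the Lyapunov function at \<open>1/2\<close>.\<close>

lemma lyapunov_anchor_bound:
  fixes a b k e u w x y m1 m2 :: real
  assumes a: "0 < a" "a \<le> 1" and b: "0 < b" "b \<le> 1"
    and k: "0 \<le> k" "k^2 = 1 - a^2" and e: "0 \<le> e" "e^2 = 1 - b^2"
    and u: "2*u*b*(a+b) = k*(2+a*b-b^2)" and w: "2*w*a*(a+b) = e*(2+a*b-a^2)"
    and m: "2*u \<le> m1" "2*w \<le> m2"
    and x: "0 \<le> x" "x \<le> a" "1 - 4.935*u^2 \<le> x"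
    and y: "0 \<le> y" "y \<le> b" "1 - 4.935*w^2 \<le> y"
  shows "2 + 2*a*b \<le> (a+b + b*k*m1 + a*e*m2)^2 + (b*x - a*y)^2 - 2*a*b*(a*x - b*y)*(b*x - a*y)"
proof -
  define p where "p = b*x - a*y"
  define q where "q = b*k*m1 + a*e*m2"
  define r where "r = b*k^2*x - a*e^2*y"
  define S where "S = k^2 + e^2"
  have "(a+b + b*k*m1 + a*e*m2)^2 + (b*x - a*y)^2 - 2*a*b*(a*x - b*y)*(b*x - a*y) - (2 + 2*a*b)
      = 2*((a+b)*q) + q^2 - p^2 + 2*(p*r) - S"
    unfolding p_def q_def r_def S_def using k(2) e(2) by algebra
  moreover have "2*S + 2*(a*b*S) + 4*(k^2*e^2) \<le> 2*((a+b)*q)"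
  proof -
    have "k^2*(2+a*b-b^2) \<le> (a+b)*(b*k*m1)"
      using a b k(1) m(1) u by (intro anchor_sine_term_ge) auto
    moreover have "e^2*(2+b*a-a^2) \<le> (b+a)*(a*e*m2)"
      using a b e(1) m(2) w by (intro anchor_sine_term_ge) (auto simp: algebra_simps)
    moreover have "k^2*(2+a*b-b^2) = k^2*(1+a*b) + k^2*e^2" by (simp add: e(2) algebra_simps)
    moreover have "e^2*(2+b*a-a^2) = e^2*(1+a*b) + k^2*e^2" by (simp add: k(2) algebra_simps)
    moreover have "2*(a+b)*q = 2*((a+b)*(b*k*m1)) + 2*((b+a)*(a*e*m2))"
      unfolding q_def by (simp add: algebra_simps)
    ultimately show ?thesis unfolding S_def by (simp add: algebra_simps)
  qed
  moreover have "- 2*(a*b*S) \<le> 2*(p*r)"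
  proof -
    have "\<bar>p\<bar> \<le> max (b*a) (a*b)"
      unfolding p_def using a b x(1,2) y(1,2) by (intro abs_scaled_diff_le) auto
    then have p: "\<bar>p\<bar> \<le> a*b" by (simp add: mult.commute)
    have "\<bar>r\<bar> \<le> max (b*k^2*a) (a*e^2*b)"
      unfolding r_def using a b x(1,2) y(1,2) by (intro abs_scaled_diff_le) auto
    moreover have "0 \<le> b*k^2*a" "0 \<le> a*e^2*b" using a b by simp_all
    ultimately have "\<bar>r\<bar> \<le> b*k^2*a + a*e^2*b" by linarith
    then have r: "\<bar>r\<bar> \<le> a*b*S" unfolding S_def by (simp add: algebra_simps)
    have "a*b \<le> 1" using a b by (simp add: mult_le_one)
    then have "\<bar>p*r\<bar> \<le> 1 * (a*b*S)" unfolding abs_mult using p r by (intro mult_mono) auto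
    then show ?thesis by (simp only: abs_le_iff) linarith
  qed
  moreover have "p^2 \<le> S" unfolding p_def S_def by (rule cos_diff_sq_le[OF a b k e u w x y])
  moreover have "0 \<le> k^2*e^2" "0 \<le> q^2" by simp_all
  ultimately show ?thesis by linarith
qed

section \<open>The Lyapunov function\<close>

lemma DERIV_sign_change_imp_min:
  fixes f f' :: "real \<Rightarrow> real" and a b c x :: real
  assumes deriv: "\<And>t. a \<le> t \<Longrightarrow> t \<le> b \<Longrightarrow> (f has_real_derivative f' t) (at t)"
    and left: "\<And>t. a \<le> t \<Longrightarrow> t \<le> c \<Longrightarrow> f' t \<le> 0"
    and right: "\<And>t. c \<le> t \<Longrightarrow> t \<le> b \<Longrightarrow> 0 \<le> f' t"
    and "a \<le> c" "c \<le> b" "a \<le> x" "x \<le> b"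
  shows "f c \<le> f x"
proof (cases "c \<le> x")
  case True
  show ?thesis
  proof (rule DERIV_nonneg_imp_nondecreasing[OF True])
    fix t assume "c \<le> t" "t \<le> x"
    then have "a \<le> t" "t \<le> b" using assms by linarith+
    then show "\<exists>y. (f has_real_derivative y) (at t) \<and> 0 \<le> y"
      using deriv right \<open>c \<le> t\<close> by blast
  qed
next
  case False
  show ?thesis
  proof (rule DERIV_nonpos_imp_nonincreasing[of x c f])
    show "x \<le> c" using False by simp
    fix t assume "x \<le> t" "t \<le> c"
    then have "a \<le> t" "t \<le> b" using assms by linarith+
    then show "\<exists>y. (f has_real_derivative y) (at t) \<and> y \<le> 0"
      using deriv left \<open>t \<le> c\<close> by blast
  qed
qed

lemma kap_nonneg: "A^2 \<le> 1 \<Longrightarrow> 0 \<le> kap A" and kap_sq: "A^2 \<le> 1 \<Longrightarrow> (kap A)^2 = 1 - A^2"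
  and kap_le_one: "kap A \<le> 1"
  by (simp_all add: kap_def)

lemma eps_nonneg: "B^2 \<le> 1 \<Longrightarrow> 0 \<le> eps B" and eps_sq: "B^2 \<le> 1 \<Longrightarrow> (eps B)^2 = 1 - B^2"
  and eps_le_one: "eps B \<le> 1"
  by (simp_all add: eps_def)

definition FF :: "real \<Rightarrow> real \<Rightarrow> real \<Rightarrow> real" where
  "FF A B U = (A+B) * sin (pi*U) + B * kap A * sin (pi * MM A B U) + A * eps B * sin (pi * NN A B U)"

definition HH :: "real \<Rightarrow> real \<Rightarrow> real \<Rightarrow> real" where
  "HH A B U = A * cos (pi * MM A B U) - B * cos (pi * NN A B U)"

definition lyapunov :: "real \<Rightarrow> real \<Rightarrow> real \<Rightarrow> real" where
  "lyapunov A B U = (FF A B U)^2 + (GG A B U)^2 - 2*A*B * HH A B (1/2) * GG A B U"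

lemma GG_has_real_derivative: "(GG A B has_real_derivative pi * FF A B t) (at t)"
  unfolding GG_def[abs_def] FF_def MM_def NN_def
  by (auto intro!: derivative_eq_intros simp: algebra_simps)

lemma FF_has_real_derivative:
  assumes "A^2 \<le> 1" "B^2 \<le> 1"
  shows "(FF A B has_real_derivative pi * (A*B * HH A B t - GG A B t)) (at t)"
proof -
  have "(FF A B has_real_derivative pi * ((A+B) * cos (pi*t) - B * (kap A)^2 * cos (pi * MM A B t)
      + A * (eps B)^2 * cos (pi * NN A B t))) (at t)"
    unfolding FF_def[abs_def] MM_def NN_def
    by (auto intro!: derivative_eq_intros simp: algebra_simps power2_eq_square)
  moreover have "(A+B) * cos (pi*t) - B * (kap A)^2 * cos (pi * MM A B t) + A * (eps B)^2 * cos (pi * NN A B t)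
      = A*B * HH A B t - GG A B t"
    unfolding kap_sq[OF assms(1)] eps_sq[OF assms(2)] GG_def HH_def
    by (simp add: algebra_simps power2_eq_square)
  ultimately show ?thesis by simp
qed

lemma lyapunov_has_real_derivative:
  assumes "A^2 \<le> 1" "B^2 \<le> 1"
  shows "(lyapunov A B has_real_derivative 2*pi*A*B * FF A B t * (HH A B t - HH A B (1/2))) (at t)"
proof -
  have "(lyapunov A B has_real_derivative 2 * FF A B t * (pi * (A*B * HH A B t - GG A B t))
      + 2 * GG A B t * (pi * FF A B t) - 2*A*B * HH A B (1/2) * (pi * FF A B t)) (at t)"
    unfolding lyapunov_def[abs_def]
    by (rule derivative_eq_intros FF_has_real_derivative[OF assms] GG_has_real_derivative refl | simp)+
  moreover have "2 * FF A B t * (pi * (A*B * HH A B t - GG A B t)) + 2 * GG A B t * (pi * FF A B t)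
      - 2*A*B * HH A B (1/2) * (pi * FF A B t) = 2*pi*A*B * FF A B t * (HH A B t - HH A B (1/2))"
    by (simp add: algebra_simps)
  ultimately show ?thesis by simp
qed

section \<open>Parameters with \<open>B0 A \<le> B\<close>\<close>

lemma B0_le_imp_anchor_le:
  assumes "A^2 \<le> 1" "B0 A \<le> B"
  shows "kap A * (2 + A*B - B^2) \<le> B * (A+B)"
proof -
  define k where "k = kap A"
  define D where "D = A^2*(1-k)^2 + 8*k*(1+k)"
  have k: "0 \<le> k" unfolding k_def by (rule kap_nonneg[OF assms(1)])
  have "(- A*(1-k) + sqrt D) / (2*(1+k)) \<le> B" using assms(2) by (simp add: B0_def D_def k_def)
  then have "sqrt D \<le> 2*(1+k)*B + A*(1-k)" using k by (simp add: divide_le_eq algebra_simps)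
  then have "0 \<le> (2*(1+k)*B + A*(1-k))^2 - D" using sqrt_le_D by simp
  also have "\<dots> = 4*(1+k) * (B*(A+B) - k*(2 + A*B - B^2))"
    unfolding D_def by (simp add: algebra_simps power2_eq_square)
  finally show ?thesis using k by (simp add: zero_le_mult_iff k_def)
qed

text \<open>The right-hand side is symmetric under \<open>(a, k) \<leftrightarrow> (b, e)\<close>; this transfers the
  hypothesis \<open>B0 A \<le> B\<close> from \<open>M(1/2)\<close> to \<open>N(1/2)\<close>.\<close>

lemma anchor_condition_symmetric:
  fixes a b k e :: real
  assumes "0 < a" "0 < b" "0 \<le> k" "k \<le> 1" "0 \<le> e" "k^2 = 1 - a^2" "e^2 = 1 - b^2"
  shows "k*(2+a*b-b^2) \<le> b*(a+b) \<longleftrightarrow> k + e + k*e \<le> 1 + a*b"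
proof -
  have "2*(b*(a+b) - k*(2+a*b-b^2)) = (1 + a*b - k - e - k*e)*(1 - k + e + k*e + a*b)"
    using assms(6,7) by algebra
  moreover have "0 < 1 - k + e + k*e + a*b" using assms(1-5) by (simp add: add_nonneg_pos)
  ultimately show ?thesis by (smt (verit) zero_le_mult_iff)
qed

lemma anchor_bounds:
  fixes a b k u :: real
  assumes "0 \<le> a" "0 < b" "b \<le> 1" "0 \<le> k"
    and u: "2*u*b*(a+b) = k*(2+a*b-b^2)" and le: "k*(2+a*b-b^2) \<le> b*(a+b)"
  shows "k \<le> 2*u" "u \<le> 1/2"
proof -
  have pos: "0 < b*(a+b)" using assms(1,2) by simp
  have "b^2 \<le> 1" using assms(2,3) by (intro power_le_one) auto
  then have "b*(a+b) \<le> 2+a*b-b^2" by (simp add: algebra_simps power2_eq_square)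
  then have "k*(b*(a+b)) \<le> 2*u*(b*(a+b))" using u assms(4) by (simp add: mult_left_mono mult.assoc)
  then show "k \<le> 2*u" using pos by (rule mult_right_le_imp_le)
  have "2*u*(b*(a+b)) \<le> 1*(b*(a+b))" using u le by (simp add: mult.assoc)
  then have "2*u \<le> 1" using pos by (rule mult_right_le_imp_le)
  then show "u \<le> 1/2" by simp
qed

locale GG_parameters =
  fixes A B :: real
  assumes A_pos: "0 < A" and A_le_one: "A \<le> 1" and B_pos: "0 < B" and B_le_one: "B \<le> 1"
    and B0_le: "B0 A \<le> B"
begin

lemma A_sq_le_one: "A^2 \<le> 1" and B_sq_le_one: "B^2 \<le> 1"
  using A_pos A_le_one B_pos B_le_one by (simp_all add: power_le_one)

lemmas kap_props = kap_nonneg[OF A_sq_le_one] kap_sq[OF A_sq_le_one] kap_le_one[of A]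
lemmas eps_props = eps_nonneg[OF B_sq_le_one] eps_sq[OF B_sq_le_one] eps_le_one[of B]

lemma MM_half: "2 * MM A B (1/2) * B * (A+B) = kap A * (2 + A*B - B^2)"
proof -
  have P: "PP A B * (B*(A+B)) = 1 + A*B" using A_pos B_pos by (simp add: PP_def)
  have "2 * MM A B (1/2) * B * (A+B) = kap A * (2 * (PP A B * (B*(A+B))) - B*(A+B))"
    by (simp add: MM_def algebra_simps)
  also have "\<dots> = kap A * (2 * (1 + A*B) - B*(A+B))" by (simp only: P)
  finally show ?thesis by (simp add: algebra_simps power2_eq_square)
qed

lemma NN_half: "2 * NN A B (1/2) * A * (B+A) = eps B * (2 + B*A - A^2)"
proof -
  have c: "(kap A)^2 / (A*(A+B)) * (A*(A+B)) = 1 - A^2" using A_pos B_pos kap_props(2) by simp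
  have "2 * NN A B (1/2) * A * (B+A) = eps B * (A*(A+B) + 2 * ((kap A)^2 / (A*(A+B)) * (A*(A+B))))"
    by (simp add: NN_def algebra_simps)
  also have "\<dots> = eps B * (A*(A+B) + 2 * (1 - A^2))" by (simp only: c)
  finally show ?thesis by (simp add: algebra_simps power2_eq_square)
qed

lemma anchor_conditions:
  "kap A * (2 + A*B - B^2) \<le> B * (A+B)" "eps B * (2 + B*A - A^2) \<le> A * (B+A)"
proof -
  show first: "kap A * (2 + A*B - B^2) \<le> B * (A+B)"
    by (rule B0_le_imp_anchor_le[OF A_sq_le_one B0_le])
  note symm = anchor_condition_symmetric[OF _ _ _ _ _ kap_props(2) eps_props(2)]
    anchor_condition_symmetric[OF _ _ _ _ _ eps_props(2) kap_props(2)]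
  show "eps B * (2 + B*A - A^2) \<le> A * (B+A)"
    using symm first A_pos B_pos kap_props eps_props by (simp add: algebra_simps)
qed

lemma MM_half_bounds: "kap A \<le> 2 * MM A B (1/2)" "MM A B (1/2) \<le> 1/2"
  using anchor_bounds[OF _ B_pos B_le_one kap_props(1) MM_half anchor_conditions(1)] A_pos by simp_all

lemma NN_half_bounds: "eps B \<le> 2 * NN A B (1/2)" "NN A B (1/2) \<le> 1/2"
  using anchor_bounds[OF _ A_pos A_le_one eps_props(1) NN_half anchor_conditions(2)] B_pos by simp_all

lemma MM_antimono: "s \<le> t \<Longrightarrow> MM A B t \<le> MM A B s"
  using kap_props(1) by (simp add: MM_def mult_left_mono)

lemma NN_mono: "s \<le> t \<Longrightarrow> NN A B s \<le> NN A B t"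
  using eps_props(1) by (simp add: NN_def mult_left_mono)

lemma PP_ge_one: "1 \<le> PP A B"
proof -
  have "B*(A+B) \<le> 1 + A*B" using B_sq_le_one by (simp add: algebra_simps power2_eq_square)
  then show ?thesis using A_pos B_pos by (simp add: PP_def le_divide_eq)
qed

lemma LL_eq: "LL A B = kap A / (1 + kap A) * PP A B"
  by (simp add: LL_def PP_def)

lemma MM_LL: "MM A B (LL A B) = LL A B"
  using kap_props(1) by (simp add: MM_def LL_eq field_simps)

lemma LL_nonneg: "0 \<le> LL A B"
  using kap_props(1) PP_ge_one by (simp add: LL_eq)

lemma LL_le_half: "LL A B \<le> 1/2"
proof -
  have "kap A * (2 * PP A B - 1) \<le> 1" using MM_half_bounds(2) by (simp add: MM_def algebra_simps)
  then show ?thesis using kap_props(1) by (simp add: LL_eq field_simps)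
qed

lemma NN_RR: "NN A B (RR A B) = 1 - RR A B"
proof -
  define c where "c = (kap A)^2 / (A*(A+B))"
  have "RR A B = (1 - eps B * c) / (1 + eps B)" by (simp add: RR_def c_def)
  moreover have "NN A B (RR A B) = eps B * (RR A B + c)" by (simp add: NN_def c_def)
  ultimately show ?thesis using eps_props(1) by (simp add: field_simps)
qed

lemma half_le_RR: "1/2 \<le> RR A B"
proof -
  have "eps B * (1 + 2 * ((kap A)^2 / (A*(A+B)))) \<le> 1"
    using NN_half_bounds(2) by (simp add: NN_def algebra_simps)
  then show ?thesis using eps_props(1) by (simp add: RR_def field_simps)
qed

lemma RR_le_one: "RR A B \<le> 1"
  using eps_props(1) A_pos B_pos by (simp add: RR_def field_simps)

lemma range_on_LL_RR:
  assumes "LL A B \<le> t" "t \<le> RR A B"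
  shows "0 \<le> t" "t \<le> 1" "0 \<le> MM A B t" "MM A B t \<le> 1" "0 \<le> NN A B t" "NN A B t \<le> 1"
proof -
  show "0 \<le> t" using assms LL_nonneg by linarith
  show "t \<le> 1" using assms RR_le_one by linarith
  show "0 \<le> MM A B t" using kap_props(1) PP_ge_one \<open>t \<le> 1\<close> by (simp add: MM_def)
  show "MM A B t \<le> 1" using MM_antimono[OF assms(1)] MM_LL LL_le_half by linarith
  show "0 \<le> NN A B t" using eps_props(1) A_pos B_pos \<open>0 \<le> t\<close> by (simp add: NN_def)
  show "NN A B t \<le> 1" using NN_mono[OF assms(2)] NN_RR half_le_RR by linarith
qed

lemma FF_nonneg:
  assumes "LL A B \<le> t" "t \<le> RR A B"
  shows "0 \<le> FF A B t"
proof -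
  note r = range_on_LL_RR[OF assms]
  have "0 \<le> sin (pi*t)" "0 \<le> sin (pi * MM A B t)" "0 \<le> sin (pi * NN A B t)"
    using r by (auto intro!: sin_ge_zero)
  then show ?thesis using A_pos B_pos kap_props(1) eps_props(1) by (simp add: FF_def)
qed

lemma HH_mono:
  assumes "LL A B \<le> s" "s \<le> t" "t \<le> RR A B"
  shows "HH A B s \<le> HH A B t"
proof -
  note rs = range_on_LL_RR[of s] and rt = range_on_LL_RR[of t]
  have "cos (pi * MM A B s) \<le> cos (pi * MM A B t)"
    using MM_antimono[OF assms(2)] rs rt assms by (intro cos_monotone_0_pi_le) auto
  moreover have "cos (pi * NN A B t) \<le> cos (pi * NN A B s)"
    using NN_mono[OF assms(2)] rs rt assms by (intro cos_monotone_0_pi_le) auto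
  ultimately show ?thesis using A_pos B_pos by (simp add: HH_def mult_le_cancel_left_pos diff_mono)
qed

lemma lyapunov_min_at_half:
  assumes "LL A B \<le> t" "t \<le> RR A B"
  shows "lyapunov A B (1/2) \<le> lyapunov A B t"
proof (rule DERIV_sign_change_imp_min[where a = "LL A B" and b = "RR A B"
      and f' = "\<lambda>s. 2*pi*A*B * FF A B s * (HH A B s - HH A B (1/2))"],
    rule lyapunov_has_real_derivative[OF A_sq_le_one B_sq_le_one])
  show "2*pi*A*B * FF A B s * (HH A B s - HH A B (1/2)) \<le> 0" if "LL A B \<le> s" "s \<le> 1/2" for s
    using FF_nonneg[OF that(1)] HH_mono[OF that] that half_le_RR A_pos B_pos
    by (simp add: mult_nonneg_nonpos)
  show "0 \<le> 2*pi*A*B * FF A B s * (HH A B s - HH A B (1/2))" if "1/2 \<le> s" "s \<le> RR A B" for s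
    using FF_nonneg[OF _ that(2)] HH_mono[OF _ that] that LL_le_half A_pos B_pos by simp
qed (use assms LL_le_half half_le_RR in auto)

lemma lyapunov_half_ge: "2 * (1 + A*B) \<le> lyapunov A B (1/2)"
proof -
  define u where "u = MM A B (1/2)"
  define w where "w = NN A B (1/2)"
  have u: "2*u*B*(A+B) = kap A * (2 + A*B - B^2)" using MM_half by (simp add: u_def)
  have w: "2*w*A*(A+B) = eps B * (2 + A*B - A^2)" using NN_half by (simp add: w_def algebra_simps)
  note tu = anchor_trig_bounds[OF less_imp_le[OF A_pos] kap_props(1,2) MM_half_bounds, folded u_def]
  note tw = anchor_trig_bounds[OF less_imp_le[OF B_pos] eps_props(1,2) NN_half_bounds, folded w_def]
  have "2 + 2*A*B \<le> (A+B + B * kap A * sin (pi*u) + A * eps B * sin (pi*w))^2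
      + (B*cos (pi*u) - A*cos (pi*w))^2 - 2*A*B*(A*cos (pi*u) - B*cos (pi*w))*(B*cos (pi*u) - A*cos (pi*w))"
    by (rule lyapunov_anchor_bound[OF A_pos A_le_one B_pos B_le_one kap_props(1,2) eps_props(1,2) u w
          tu(1) tw(1) tu(2,3) cos_pi_mult_ge tw(2,3) cos_pi_mult_ge])
  also have "\<dots> = lyapunov A B (1/2)"
    by (simp add: lyapunov_def FF_def GG_def HH_def u_def w_def)
  finally show ?thesis by simp
qed

end

theorem theorem1p3:
  fixes A B U :: real
  assumes "0 < A" "A \<le> 1" "0 < B" "B \<le> 1"
    and "B \<ge> B0 A"
    and "GG A B U = 0"
    and "LL A B \<le> U" "U \<le> RR A B"
  shows "deriv (GG A B) U / pi \<ge> sqrt (2 * (1 + A*B))"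
proof -
  interpret GG_parameters A B using assms(1-5) by unfold_locales
  have "2 * (1 + A*B) \<le> lyapunov A B U"
    using lyapunov_half_ge lyapunov_min_at_half[OF assms(7,8)] by linarith
  also have "\<dots> = (FF A B U)^2" using assms(6) by (simp add: lyapunov_def)
  finally have "sqrt (2 * (1 + A*B)) \<le> FF A B U"
    using FF_nonneg[OF assms(7,8)] by (simp add: real_le_lsqrt)
  moreover have "deriv (GG A B) U = pi * FF A B U"
    by (rule DERIV_imp_deriv[OF GG_has_real_derivative])
  ultimately show ?thesis by simp
qed

end
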